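(* Let $k\geq 1$ and $p$ be real. The chain of inequalities $$\tfrac{k}{k+2}\left( \tfrac{\sinh x}{x}\right) ^{kp}+\tfrac{2}{k+2}\left( \tfrac{\tanh x}{x}\right) ^{p}>\tfrac{2}{k+2}\left( \tfrac{x}{\sinh x}\right) ^{kp}+\tfrac{k}{k+2}\left( \tfrac{x}{\tanh x}\right) ^{p}>1$$ holds for all $x\in(0,\infty)$ if and only if $k\geq 2$ and $p\geq \frac{12}{5(k+2)}$. *)

theory Defs
  imports Complex_Main
begin

end

theory Submission
  imports Defs "HOL-Real_Asymp.Real_Asymp"
begin

text \<open>
  Put \<open>U x = ln (sinh x / x)\<close> and \<open>V x = ln (x cosh x / sinh x)\<close>, both positive on
  \<open>(0, \<infinity>)\<close>. The four powers in the chain are \<open>exp (\<plusminus>k p U)\<close> and \<open>exp (\<plusminus>p V)\<close>, so the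
  first inequality is equivalent to \<open>p V < k p U\<close>, and the second says that
  \<open>M = 2/(k+2) exp (-k p U) + k/(k+2) exp (p V)\<close> exceeds 1.
  Lazarevic's inequality \<open>V < 2 U\<close> gives the first inequality when \<open>k \<ge> 2\<close> and \<open>p > 0\<close>;
  conversely \<open>U \<ge> V\<close> for large \<open>x\<close> forces \<open>p > 0\<close>, and \<open>U / V \<rightarrow> 1/2\<close> at \<open>0\<close> forces \<open>k \<ge> 2\<close>.
  Since \<open>M \<rightarrow> 1\<close> at \<open>0\<close>, the second inequality follows from \<open>M' > 0\<close>, which reduces through
  \<open>1 + 2x\<^sup>2/5 < exp (3/5 (V + 2U))\<close> to inequalities between polynomials in \<open>x\<close>, \<open>sinh x\<close>,
  \<open>cosh x\<close>, each proved by repeated differentiation. Conversely,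
  \<open>M - 1 = k p/(k+2) (p (k+2)/36 - 1/15) x\<^sup>4 + o(x\<^sup>4)\<close> forces \<open>p \<ge> 12/(5(k+2))\<close>.
\<close>

lemma gt_of_tendsto_at_right_deriv_pos:
  fixes f f' :: "real \<Rightarrow> real"
  assumes lim: "(f \<longlongrightarrow> l) (at_right a)"
    and der: "\<And>t. t > a \<Longrightarrow> (f has_real_derivative f' t) (at t)"
    and pos: "\<And>t. t > a \<Longrightarrow> f' t > 0"
    and x: "x > a"
  shows "f x > l"
proof -
  have mono: "f s < f t" if "a < s" "s < t" for s t
  proof (rule DERIV_pos_imp_increasing[OF that(2)])
    fix y assume "s \<le> y" "y \<le> t"
    with that have "y > a" by linarith
    with der pos show "\<exists>D. DERIV f y :> D \<and> D > 0" by blast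
  qed
  have "eventually (\<lambda>s. f s \<le> f ((a + x) / 2)) (at_right a)"
    using eventually_at_right_real[of a "(a + x) / 2"] x
    by (auto elim!: eventually_mono intro!: less_imp_le mono)
  then have "l \<le> f ((a + x) / 2)"
    by (rule tendsto_upperbound[OF lim]) simp
  also have "\<dots> < f x"
    using x by (intro mono) auto
  finally show ?thesis .
qed

lemma pos_of_deriv_pos_from_zero:
  fixes f f' :: "real \<Rightarrow> real"
  assumes "f 0 = 0"
    and der: "\<And>t. t \<ge> 0 \<Longrightarrow> (f has_real_derivative f' t) (at t)"
    and "\<And>t. t > 0 \<Longrightarrow> f' t > 0"
    and "x > 0"
  shows "f x > 0"
proof -
  have "isCont f 0"
    using der[of 0] by (simp add: DERIV_isCont)
  then have "(f \<longlongrightarrow> 0) (at_right 0)"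
    using \<open>f 0 = 0\<close> by (simp add: isCont_def filterlim_at_split)
  then show ?thesis
    by (rule gt_of_tendsto_at_right_deriv_pos[where f' = f']) (use assms in auto)
qed

lemma sinh_gt_self:
  fixes x :: real
  assumes "x > 0"
  shows "x < sinh x"
proof -
  have "0 < sinh x - x"
    by (rule pos_of_deriv_pos_from_zero[where f' = "\<lambda>t. cosh t - 1", OF _ _ _ assms])
      (auto intro!: derivative_eq_intros simp: cosh_real_one_iff cosh_real_ge_1 order.strict_iff_order)
  then show ?thesis by simp
qed

lemma sinh_less_mult_cosh:
  fixes x :: real
  assumes "x > 0"
  shows "sinh x < x * cosh x"
proof -
  have "0 < x * cosh x - sinh x"
    by (rule pos_of_deriv_pos_from_zero[where f' = "\<lambda>t. t * sinh t", OF _ _ _ assms])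
      (auto intro!: derivative_eq_intros)
  then show ?thesis by simp
qed

lemma cosh_mult_self: "cosh x * cosh x = 1 + sinh x * sinh (x :: real)"
  using cosh_square_eq[of x] by (simp add: power2_eq_square)

definition log_sinhc :: "real \<Rightarrow> real" where
  "log_sinhc x = ln (sinh x / x)"

definition log_xcoth :: "real \<Rightarrow> real" where
  "log_xcoth x = ln (x * cosh x / sinh x)"

lemma log_sinhc_pos: "x > 0 \<Longrightarrow> log_sinhc x > 0"
  unfolding log_sinhc_def using sinh_gt_self[of x] by simp

lemma log_xcoth_pos: "x > 0 \<Longrightarrow> log_xcoth x > 0"
  unfolding log_xcoth_def using sinh_less_mult_cosh[of x] by simp

lemma has_real_derivative_log_sinhc:
  "x > 0 \<Longrightarrow> (log_sinhc has_real_derivative (cosh x / sinh x - 1 / x)) (at x)"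
  unfolding log_sinhc_def[abs_def]
  by (auto intro!: derivative_eq_intros simp: field_simps power2_eq_square)

lemma has_real_derivative_log_xcoth:
  "x > 0 \<Longrightarrow> (log_xcoth has_real_derivative (1 / x + sinh x / cosh x - cosh x / sinh x)) (at x)"
  unfolding log_xcoth_def[abs_def]
  by (auto intro!: derivative_eq_intros simp: field_simps power2_eq_square)

lemma tendsto_log_sinhc_at_right_0: "(log_sinhc \<longlongrightarrow> 0) (at_right 0)"
  unfolding log_sinhc_def[abs_def] by real_asymp

lemma tendsto_log_xcoth_at_right_0: "(log_xcoth \<longlongrightarrow> 0) (at_right 0)"
  unfolding log_xcoth_def[abs_def] by real_asymp

lemma log_xcoth_eq: "x > 0 \<Longrightarrow> log_xcoth x = ln (cosh x) - log_sinhc x"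
  unfolding log_sinhc_def log_xcoth_def by (simp add: ln_div ln_mult)

lemma log_sinhc_double: "x > 0 \<Longrightarrow> log_sinhc (2 * x) = log_xcoth x + 2 * log_sinhc x"
  unfolding log_sinhc_def log_xcoth_def by (simp add: sinh_double ln_div ln_mult)

text \<open>Lazarevic's inequality \<open>cosh x < (sinh x / x)\<^sup>3\<close>, in logarithmic form.\<close>

lemma log_xcoth_less_double_log_sinhc:
  assumes "x > 0"
  shows "log_xcoth x < 2 * log_sinhc x"
proof -
  have Q: "0 < 2 * t * cosh t ^ 2 + t - 3 * sinh t * cosh t" if "t > 0" for t :: real
  proof (rule pos_of_deriv_pos_from_zero[where f' = "\<lambda>t. 4 * sinh t * (t * cosh t - sinh t)", OF _ _ _ that])
    fix t :: real
    show "((\<lambda>t. 2 * t * cosh t ^ 2 + t - 3 * sinh t * cosh t) has_real_derivative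
        4 * sinh t * (t * cosh t - sinh t)) (at t)"
      by (rule derivative_eq_intros refl)+ (use cosh_mult_self[of t] in \<open>simp add: power2_eq_square; algebra\<close>)
  qed (use sinh_less_mult_cosh in auto)
  have "0 < 3 * log_sinhc x - ln (cosh x)"
  proof (rule gt_of_tendsto_at_right_deriv_pos[where f' = "\<lambda>t. 3 * (cosh t / sinh t - 1 / t) - sinh t / cosh t", OF _ _ _ assms])
    show "((\<lambda>t. 3 * log_sinhc t - ln (cosh t)) \<longlongrightarrow> 0) (at_right 0)"
      unfolding log_sinhc_def[abs_def] by real_asymp
  next
    fix t :: real assume t: "t > 0"
    show "((\<lambda>t. 3 * log_sinhc t - ln (cosh t)) has_real_derivative
        3 * (cosh t / sinh t - 1 / t) - sinh t / cosh t) (at t)"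
      using has_real_derivative_log_sinhc[OF t] by (auto intro!: derivative_eq_intros)
    have "3 * (cosh t / sinh t - 1 / t) - sinh t / cosh t
        = (2 * t * cosh t ^ 2 + t - 3 * sinh t * cosh t) / (t * sinh t * cosh t)"
      using t by (simp add: field_simps power2_eq_square) (use cosh_mult_self[of t] in algebra)
    then show "0 < 3 * (cosh t / sinh t - 1 / t) - sinh t / cosh t"
      using Q[OF t] t by simp
  qed
  then show ?thesis
    using log_xcoth_eq[OF assms] by simp
qed

lemma five_ln_less_three_log_sinhc:
  assumes "x > 0"
  shows "5 * ln (1 + x\<^sup>2 / 10) < 3 * log_sinhc x"
proof -
  have K: "0 < 4 * sinh t - 4 * t * cosh t + 3 * t\<^sup>2 * sinh t" if "t > 0" for t :: real
  proof (rule pos_of_deriv_pos_from_zero[where f' = "\<lambda>t. 2 * t * sinh t + 3 * t\<^sup>2 * cosh t", OF _ _ _ that])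
    show "((\<lambda>t. 4 * sinh t - 4 * t * cosh t + 3 * t\<^sup>2 * sinh t) has_real_derivative
        2 * s * sinh s + 3 * s\<^sup>2 * cosh s) (at s)" for s :: real
      by (auto intro!: derivative_eq_intros simp: algebra_simps power2_eq_square)
  qed (auto intro!: add_pos_pos)
  have I: "0 < 3 * (10 + t\<^sup>2) * (t * cosh t - sinh t) - 10 * t\<^sup>2 * sinh t" if "t > 0" for t :: real
  proof (rule pos_of_deriv_pos_from_zero[where f' = "\<lambda>t. t * (4 * sinh t - 4 * t * cosh t + 3 * t\<^sup>2 * sinh t)", OF _ _ _ that])
    show "((\<lambda>t. 3 * (10 + t\<^sup>2) * (t * cosh t - sinh t) - 10 * t\<^sup>2 * sinh t) has_real_derivative
        s * (4 * sinh s - 4 * s * cosh s + 3 * s\<^sup>2 * sinh s)) (at s)" for s :: real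
      by (auto intro!: derivative_eq_intros simp: algebra_simps power2_eq_square)
  qed (use K in auto)
  have "0 < 3 * log_sinhc x - 5 * ln (1 + x\<^sup>2 / 10)"
  proof (rule gt_of_tendsto_at_right_deriv_pos[where f' = "\<lambda>t. 3 * (cosh t / sinh t - 1 / t) - t / (1 + t\<^sup>2 / 10)", OF _ _ _ assms])
    show "((\<lambda>t. 3 * log_sinhc t - 5 * ln (1 + t\<^sup>2 / 10)) \<longlongrightarrow> 0) (at_right 0)"
      unfolding log_sinhc_def[abs_def] by real_asymp
  next
    fix t :: real assume t: "t > 0"
    have "0 < 1 + t\<^sup>2 / 10" by (simp add: add_pos_nonneg)
    then show "((\<lambda>t. 3 * log_sinhc t - 5 * ln (1 + t\<^sup>2 / 10)) has_real_derivative
        3 * (cosh t / sinh t - 1 / t) - t / (1 + t\<^sup>2 / 10)) (at t)"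
      using has_real_derivative_log_sinhc[OF t]
      by (auto intro!: derivative_eq_intros simp: field_simps power2_eq_square)
    have "0 < 10 + t\<^sup>2" by (simp add: add_pos_nonneg)
    then have "3 * (cosh t / sinh t - 1 / t) - t / (1 + t\<^sup>2 / 10)
        = (3 * (10 + t\<^sup>2) * (t * cosh t - sinh t) - 10 * t\<^sup>2 * sinh t) / (t * sinh t * (10 + t\<^sup>2))"
      using t by (simp add: field_simps power2_eq_square)
    then show "0 < 3 * (cosh t / sinh t - 1 / t) - t / (1 + t\<^sup>2 / 10)"
      using I[OF t] t \<open>0 < 10 + t\<^sup>2\<close> by simp
  qed
  then show ?thesis by simp
qed

lemma one_plus_sq_less_exp_log_sinhc_log_xcoth:
  assumes "x > 0"
  shows "1 + 2 * x\<^sup>2 / 5 < exp (3 / 5 * (log_xcoth x + 2 * log_sinhc x))"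
proof -
  have "ln (1 + 2 * x\<^sup>2 / 5) < 3 / 5 * (log_xcoth x + 2 * log_sinhc x)"
    using five_ln_less_three_log_sinhc[of "2 * x"] log_sinhc_double[OF assms] assms
    by (simp add: power2_eq_square)
  moreover have "0 < 1 + 2 * x\<^sup>2 / 5" by (simp add: add_pos_nonneg)
  ultimately show ?thesis
    by (metis exp_less_cancel_iff exp_ln)
qed

lemma sinh_lower_bound_cosh:
  fixes x :: real
  assumes "x > 0"
  shows "10 * x * cosh x + 20 * x + x ^ 3 < (30 + x\<^sup>2) * sinh x"
proof -
  have H2: "0 < (2 + t\<^sup>2) * sinh t - 2 * t * cosh t" if "t > 0" for t :: real
    by (rule pos_of_deriv_pos_from_zero[where f' = "\<lambda>t. t\<^sup>2 * cosh t", OF _ _ _ that])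
      (auto intro!: derivative_eq_intros simp: algebra_simps power2_eq_square)
  have H1: "0 < (6 + t\<^sup>2) * cosh t - 4 * t * sinh t - 6" if "t > 0" for t :: real
    by (rule pos_of_deriv_pos_from_zero[OF _ _ H2 that])
      (auto intro!: derivative_eq_intros simp: algebra_simps power2_eq_square)
  have H0: "0 < (12 + t\<^sup>2) * sinh t - 6 * t * cosh t - 6 * t" if "t > 0" for t :: real
    by (rule pos_of_deriv_pos_from_zero[OF _ _ H1 that])
      (auto intro!: derivative_eq_intros simp: algebra_simps power2_eq_square)
  have G1: "0 < (20 + t\<^sup>2) * cosh t - 8 * t * sinh t - 20 - 3 * t\<^sup>2" if "t > 0" for t :: real
    by (rule pos_of_deriv_pos_from_zero[OF _ _ H0 that])
      (auto intro!: derivative_eq_intros simp: algebra_simps power2_eq_square)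
  have "0 < (30 + x\<^sup>2) * sinh x - 10 * x * cosh x - 20 * x - x ^ 3"
    by (rule pos_of_deriv_pos_from_zero[OF _ _ G1 assms])
      (auto intro!: derivative_eq_intros simp: algebra_simps power2_eq_square power3_eq_cube)
  then show ?thesis by simp
qed

lemma deriv_log_sinhc_less_deriv_log_xcoth:
  fixes x :: real
  assumes x: "x > 0"
  shows "2 * (cosh x / sinh x - 1 / x) < (1 + 2 * x\<^sup>2 / 5) * (1 / x + sinh x / cosh x - cosh x / sinh x)"
proof -
  define N where "N = 15 * sinh x * cosh x + 2 * x\<^sup>2 * sinh x * cosh x - (10 * x * cosh x ^ 2 + 5 * x + 2 * x ^ 3)"
  have "0 < N"
    using sinh_lower_bound_cosh[of "2 * x"] x
    unfolding N_def sinh_double cosh_double sinh_square_eq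
    by (simp add: algebra_simps power2_eq_square power3_eq_cube)
  then have "0 < N / (5 * x * sinh x * cosh x)"
    using x by simp
  moreover have "(1 + 2 * x\<^sup>2 / 5) * (1 / x + sinh x / cosh x - cosh x / sinh x) - 2 * (cosh x / sinh x - 1 / x)
      = N / (5 * x * sinh x * cosh x)"
    using x unfolding N_def
    by (simp add: field_simps power2_eq_square power3_eq_cube) (use cosh_mult_self[of x] in algebra)
  ultimately show ?thesis by linarith
qed

definition middle_term :: "real \<Rightarrow> real \<Rightarrow> real \<Rightarrow> real" where
  "middle_term k p x = 2 / (k + 2) * exp (- (k * p) * log_sinhc x) + k / (k + 2) * exp (p * log_xcoth x)"

lemma tendsto_middle_term_at_right_0:
  assumes "k + 2 \<noteq> 0"
  shows "(middle_term k p \<longlongrightarrow> 1) (at_right 0)"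
proof -
  have "(middle_term k p \<longlongrightarrow> 2 / (k + 2) * exp (- (k * p) * 0) + k / (k + 2) * exp (p * 0)) (at_right 0)"
    unfolding middle_term_def[abs_def]
    by (intro tendsto_intros tendsto_log_sinhc_at_right_0 tendsto_log_xcoth_at_right_0)
  also have "2 / (k + 2) * exp (- (k * p) * 0) + k / (k + 2) * exp (p * 0) = 1"
    using assms by (simp add: add_divide_distrib[symmetric])
  finally show ?thesis .
qed

lemma has_real_derivative_middle_term:
  assumes "x > 0" "k + 2 \<noteq> 0"
  shows "(middle_term k p has_real_derivative
      k * p / (k + 2) * (exp (p * log_xcoth x) * (1 / x + sinh x / cosh x - cosh x / sinh x)
        - 2 * exp (- (k * p) * log_sinhc x) * (cosh x / sinh x - 1 / x))) (at x)"
proof -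
  have factor: "k * p / (k + 2) * (E2 * B - 2 * E1 * A)
      = 2 / (k + 2) * (E1 * (- (k * p) * A)) + k / (k + 2) * (E2 * (p * B))" for E1 E2 A B :: real
    unfolding times_divide_eq_left add_divide_distrib[symmetric] by (simp add: algebra_simps)
  show ?thesis
    unfolding middle_term_def[abs_def] factor
    by (rule derivative_eq_intros has_real_derivative_log_sinhc has_real_derivative_log_xcoth assms refl)+
      (simp add: algebra_simps)
qed

lemma deriv_middle_term_pos:
  assumes k: "k \<ge> 2" and p: "p \<ge> 12 / (5 * (k + 2))" and x: "x > 0"
  shows "2 * exp (- (k * p) * log_sinhc x) * (cosh x / sinh x - 1 / x)
    < exp (p * log_xcoth x) * (1 / x + sinh x / cosh x - cosh x / sinh x)"
proof -
  define a b where "a = log_sinhc x" and "b = log_xcoth x"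
  define a' b' where "a' = cosh x / sinh x - 1 / x" and "b' = 1 / x + sinh x / cosh x - cosh x / sinh x"
  have "0 < a'"
    using sinh_less_mult_cosh[OF x] x unfolding a'_def by (simp add: field_simps)
  moreover have deriv_less: "2 * a' < (1 + 2 * x\<^sup>2 / 5) * b'"
    using deriv_log_sinhc_less_deriv_log_xcoth[OF x] unfolding a'_def b'_def .
  ultimately have "0 < (1 + 2 * x\<^sup>2 / 5) * b'"
    by linarith
  then have "0 < b'"
    by (rule zero_less_mult_pos) (simp add: add_pos_nonneg)
  have "0 \<le> 3 * (k - 2) * (2 * a - b)"
    using k log_xcoth_less_double_log_sinhc[OF x] unfolding a_def b_def by simp
  then have "3 / 5 * (b + 2 * a) \<le> 12 / (5 * (k + 2)) * (b + k * a)"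
    using k by (simp add: field_simps)
  also have "\<dots> \<le> p * (b + k * a)"
    using p k log_sinhc_pos[OF x] log_xcoth_pos[OF x] unfolding a_def b_def
    by (intro mult_right_mono) auto
  finally have "1 + 2 * x\<^sup>2 / 5 < exp (p * (b + k * a))"
    using one_plus_sq_less_exp_log_sinhc_log_xcoth[OF x] unfolding a_def b_def
    by (meson exp_le_cancel_iff less_le_trans)
  then have "2 * a' < exp (p * (b + k * a)) * b'"
    using deriv_less \<open>0 < b'\<close> by (smt (verit) mult_right_mono)
  then have "exp (- (k * p) * a) * (2 * a') < exp (- (k * p) * a) * (exp (p * (b + k * a)) * b')"
    by simp
  then show ?thesis
    unfolding a_def b_def a'_def b'_def by (simp add: mult_exp_exp algebra_simps)
qed

lemma middle_term_gt_one:
  assumes k: "k \<ge> 2" and p: "p \<ge> 12 / (5 * (k + 2))" and x: "x > 0"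
  shows "1 < middle_term k p x"
proof (rule gt_of_tendsto_at_right_deriv_pos[OF tendsto_middle_term_at_right_0 has_real_derivative_middle_term _ x])
  have "0 < 12 / (5 * (k + 2))"
    using k by simp
  then have "0 < p"
    using p by linarith
  then have "0 < k * p / (k + 2)"
    using k by simp
  then show "0 < k * p / (k + 2) * (exp (p * log_xcoth t) * (1 / t + sinh t / cosh t - cosh t / sinh t)
      - 2 * exp (- (k * p) * log_sinhc t) * (cosh t / sinh t - 1 / t))" if "t > 0" for t
    using deriv_middle_term_pos[OF k p that] by (intro mult_pos_pos) simp_all
qed (use k in auto)

lemma tendsto_exp_remainder_div_square:
  fixes a g :: "'a \<Rightarrow> real"
  assumes "filterlim a (at 0) F" and "((\<lambda>x. a x / g x) \<longlongrightarrow> c) F"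
  shows "((\<lambda>x. (exp (a x) - 1 - a x) / (g x)\<^sup>2) \<longlongrightarrow> c\<^sup>2 / 2) F"
proof -
  define q where "q t = (exp t - 1 - t) / t\<^sup>2" for t :: real
  have "(q \<longlongrightarrow> 1 / 2) (at 0)"
    unfolding q_def[abs_def] by real_asymp
  then have "((\<lambda>x. q (a x)) \<longlongrightarrow> 1 / 2) F"
    using assms(1) by (rule filterlim_compose)
  then have "((\<lambda>x. (a x / g x)\<^sup>2 * q (a x)) \<longlongrightarrow> c\<^sup>2 * (1 / 2)) F"
    by (intro tendsto_intros assms(2))
  moreover have "(a x / g x)\<^sup>2 * q (a x) = (exp (a x) - 1 - a x) / (g x)\<^sup>2" for x
    by (cases "a x = 0") (simp_all add: q_def power_divide)
  ultimately show ?thesis by simp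
qed

text \<open>
  Expanding \<open>exp\<close> to second order, \<open>(middle_term k p x - 1) / x\<^sup>4\<close> tends to
  \<open>k p/(k+2) (p (k+2)/36 - 1/15)\<close>, which is negative below the threshold.
\<close>

lemma exists_middle_term_less_one:
  assumes k: "k > 0" and p0: "p > 0" and p: "p < 12 / (5 * (k + 2))"
  shows "\<exists>x>0. middle_term k p x < 1"
proof -
  define a b where "a x = - (k * p) * log_sinhc x" and "b x = p * log_xcoth x" for x
  define L where "L = k * p / (k + 2) * (- 1 / 15) + 2 / (k + 2) * ((- (k * p) / 6)\<^sup>2 / 2)
    + k / (k + 2) * ((p / 3)\<^sup>2 / 2)"
  have right0: "eventually (\<lambda>x. x > 0) (at_right (0 :: real))"
    by (rule eventually_at_right_less)
  have a_at0: "filterlim a (at 0) (at_right 0)"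
  proof (rule filterlim_atI)
    show "(a \<longlongrightarrow> 0) (at_right 0)"
      unfolding a_def using tendsto_mult_right_zero[OF tendsto_log_sinhc_at_right_0, where c = "- (k * p)"] by simp
    show "eventually (\<lambda>x. a x \<noteq> 0) (at_right 0)"
      using right0 by eventually_elim (use k p0 in \<open>simp add: a_def log_sinhc_pos[THEN less_imp_neq, symmetric]\<close>)
  qed
  have b_at0: "filterlim b (at 0) (at_right 0)"
  proof (rule filterlim_atI)
    show "(b \<longlongrightarrow> 0) (at_right 0)"
      unfolding b_def using tendsto_mult_right_zero[OF tendsto_log_xcoth_at_right_0, where c = p] by simp
    show "eventually (\<lambda>x. b x \<noteq> 0) (at_right 0)"
      using right0 by eventually_elim (use p0 in \<open>simp add: b_def log_xcoth_pos[THEN less_imp_neq, symmetric]\<close>)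
  qed
  have a_quadratic: "((\<lambda>x. a x / x\<^sup>2) \<longlongrightarrow> - (k * p) / 6) (at_right 0)"
  proof -
    have "((\<lambda>x. log_sinhc x / x\<^sup>2) \<longlongrightarrow> 1 / 6) (at_right 0)"
      unfolding log_sinhc_def[abs_def] by real_asymp
    from tendsto_mult_left[OF this, of "- (k * p)"] show ?thesis
      unfolding a_def by simp
  qed
  have b_quadratic: "((\<lambda>x. b x / x\<^sup>2) \<longlongrightarrow> p / 3) (at_right 0)"
  proof -
    have "((\<lambda>x. log_xcoth x / x\<^sup>2) \<longlongrightarrow> 1 / 3) (at_right 0)"
      unfolding log_xcoth_def[abs_def] by real_asymp
    from tendsto_mult_left[OF this, of p] show ?thesis
      unfolding b_def by simp
  qed
  have quartic: "((\<lambda>x. (log_xcoth x - 2 * log_sinhc x) / x ^ 4) \<longlongrightarrow> - 1 / 15) (at_right 0)"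
    unfolding log_sinhc_def[abs_def] log_xcoth_def[abs_def] by real_asymp
  have "((\<lambda>x. k * p / (k + 2) * ((log_xcoth x - 2 * log_sinhc x) / x ^ 4)
      + 2 / (k + 2) * ((exp (a x) - 1 - a x) / (x\<^sup>2)\<^sup>2)
      + k / (k + 2) * ((exp (b x) - 1 - b x) / (x\<^sup>2)\<^sup>2)) \<longlongrightarrow> L) (at_right 0)"
    unfolding L_def
    by (intro tendsto_add tendsto_mult_left tendsto_exp_remainder_div_square quartic a_at0 b_at0
        a_quadratic b_quadratic)
  moreover have "k * p / (k + 2) * ((log_xcoth x - 2 * log_sinhc x) / x ^ 4)
      + 2 / (k + 2) * ((exp (a x) - 1 - a x) / (x\<^sup>2)\<^sup>2)
      + k / (k + 2) * ((exp (b x) - 1 - b x) / (x\<^sup>2)\<^sup>2) = (middle_term k p x - 1) / x ^ 4" for x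
  proof -
    have "middle_term k p x - 1 = k * p / (k + 2) * (log_xcoth x - 2 * log_sinhc x)
        + 2 / (k + 2) * (exp (a x) - 1 - a x) + k / (k + 2) * (exp (b x) - 1 - b x)"
    proof -
      have "2 / (k + 2) + k / (k + 2) = 1"
        using k by (simp add: add_divide_distrib[symmetric])
      moreover have "2 / (k + 2) * a x + k / (k + 2) * b x = k * p / (k + 2) * (log_xcoth x - 2 * log_sinhc x)"
        unfolding a_def b_def times_divide_eq_left add_divide_distrib[symmetric] by (simp add: algebra_simps)
      ultimately show ?thesis
        unfolding middle_term_def a_def[symmetric] b_def[symmetric]
        by (simp add: algebra_simps add_divide_distrib diff_divide_distrib)
    qed
    moreover have "(x\<^sup>2)\<^sup>2 = x ^ 4"
      by simp
    ultimately show ?thesis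
      by (simp only: add_divide_distrib times_divide_eq_right)
  qed
  moreover have "L < 0"
  proof -
    have cancel: "(k + 2) * (c / (k + 2) * X) = c * X" for c X
      using k by simp
    have "(k + 2) * L = k * p * (- 1 / 15) + 2 * ((- (k * p) / 6)\<^sup>2 / 2) + k * ((p / 3)\<^sup>2 / 2)"
      unfolding L_def distrib_left cancel ..
    also have "\<dots> = k * p * (p * (k + 2) / 36 - 1 / 15)"
      by (simp add: field_simps power2_eq_square)
    finally have "(k + 2) * L = k * p * (p * (k + 2) / 36 - 1 / 15)" .
    moreover have "p * (k + 2) < 12 / 5"
      using p k by (simp add: less_divide_eq algebra_simps)
    ultimately have "(k + 2) * L < 0"
      using k p0 by (simp add: mult_pos_neg)
    then show ?thesis
      using k by (simp add: mult_less_0_iff)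
  qed
  ultimately have "eventually (\<lambda>x. (middle_term k p x - 1) / x ^ 4 < 0) (at_right 0)"
    by (simp add: order_tendstoD(2))
  then have "eventually (\<lambda>x. x > 0 \<and> middle_term k p x < 1) (at_right 0)"
    using right0 by eventually_elim (auto simp: divide_less_0_iff)
  then show ?thesis
    using eventually_happens'[of "at_right (0 :: real)"] by auto
qed

lemma exists_log_xcoth_le_log_sinhc: "\<exists>x>0. log_xcoth x \<le> log_sinhc x"
proof -
  have "eventually (\<lambda>x. log_xcoth x \<le> log_sinhc x) at_top"
    unfolding log_sinhc_def log_xcoth_def by real_asymp
  then have "eventually (\<lambda>x. x > 0 \<and> log_xcoth x \<le> log_sinhc x) at_top"
    using eventually_gt_at_top[of 0] by eventually_elim auto
  then show ?thesis
    using eventually_happens'[of "at_top :: real filter"] by auto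
qed

lemma exists_mult_log_sinhc_less_log_xcoth:
  assumes "k < 2"
  shows "\<exists>x>0. k * log_sinhc x < log_xcoth x"
proof -
  have "((\<lambda>x. log_sinhc x / log_xcoth x) \<longlongrightarrow> 1 / 2) (at_right 0)"
    unfolding log_sinhc_def[abs_def] log_xcoth_def[abs_def] by real_asymp
  from tendsto_mult_left[OF this, of k] assms
  have "eventually (\<lambda>x. k * (log_sinhc x / log_xcoth x) < 1) (at_right 0)"
    by (intro order_tendstoD(2)) auto
  then have "eventually (\<lambda>x. x > 0 \<and> k * log_sinhc x < log_xcoth x) (at_right 0)"
    using eventually_at_right_less[of 0]
    by eventually_elim (use log_xcoth_pos in \<open>auto simp: field_simps\<close>)
  then show ?thesis
    using eventually_happens'[of "at_right (0 :: real)"] by auto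
qed

lemma weighted_exp_gt_iff:
  fixes \<alpha> \<beta> s t :: real
  assumes "\<alpha> > 0" "\<beta> > 0"
  shows "\<beta> * exp (- s) + \<alpha> * exp t < \<alpha> * exp s + \<beta> * exp (- t) \<longleftrightarrow> t < s"
proof
  assume "t < s"
  then have "\<alpha> * exp t < \<alpha> * exp s" "\<beta> * exp (- s) < \<beta> * exp (- t)"
    using assms by simp_all
  then show "\<beta> * exp (- s) + \<alpha> * exp t < \<alpha> * exp s + \<beta> * exp (- t)"
    by linarith
next
  assume "\<beta> * exp (- s) + \<alpha> * exp t < \<alpha> * exp s + \<beta> * exp (- t)"
  moreover have "\<alpha> * exp s \<le> \<alpha> * exp t" "\<beta> * exp (- t) \<le> \<beta> * exp (- s)" if "s \<le> t"
    using assms that by simp_all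
  ultimately show "t < s"
    by fastforce
qed

lemma powr_eq_exp_log_sinhc_log_xcoth:
  fixes x c :: real
  assumes "x > 0"
  shows "(sinh x / x) powr c = exp (c * log_sinhc x)"
    and "(x / sinh x) powr c = exp (- c * log_sinhc x)"
    and "(x / tanh x) powr c = exp (c * log_xcoth x)"
    and "(tanh x / x) powr c = exp (- c * log_xcoth x)"
  using assms
  by (simp_all add: powr_def log_sinhc_def log_xcoth_def tanh_def ln_div ln_mult algebra_simps)

lemma hyperbolic_chain_iff:
  fixes k p x :: real
  assumes k: "k > 0" and x: "x > 0"
  shows "(k / (k + 2) * (sinh x / x) powr (k * p) + 2 / (k + 2) * (tanh x / x) powr p
            > 2 / (k + 2) * (x / sinh x) powr (k * p) + k / (k + 2) * (x / tanh x) powr p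
          \<and> 2 / (k + 2) * (x / sinh x) powr (k * p) + k / (k + 2) * (x / tanh x) powr p > 1)
    \<longleftrightarrow> p * log_xcoth x < k * p * log_sinhc x \<and> 1 < middle_term k p x"
proof -
  have "2 / (k + 2) * (x / sinh x) powr (k * p) + k / (k + 2) * (x / tanh x) powr p = middle_term k p x"
    unfolding middle_term_def powr_eq_exp_log_sinhc_log_xcoth[OF x] ..
  moreover have "2 / (k + 2) * exp (- (k * p * log_sinhc x)) + k / (k + 2) * exp (p * log_xcoth x)
      < k / (k + 2) * exp (k * p * log_sinhc x) + 2 / (k + 2) * exp (- (p * log_xcoth x))
    \<longleftrightarrow> p * log_xcoth x < k * p * log_sinhc x"
    using k by (intro weighted_exp_gt_iff) simp_all
  ultimately show ?thesis
    unfolding powr_eq_exp_log_sinhc_log_xcoth[OF x] by simp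
qed

lemma log_chain_of_parameters:
  assumes k: "k \<ge> 2" and p: "p \<ge> 12 / (5 * (k + 2))" and x: "x > 0"
  shows "p * log_xcoth x < k * p * log_sinhc x \<and> 1 < middle_term k p x"
proof
  have "0 < 12 / (5 * (k + 2))"
    using k by simp
  then have "p > 0"
    using p by linarith
  have "log_xcoth x < k * log_sinhc x"
    using log_xcoth_less_double_log_sinhc[OF x] mult_right_mono[OF k less_imp_le[OF log_sinhc_pos[OF x]]]
    by linarith
  then show "p * log_xcoth x < k * p * log_sinhc x"
    using \<open>p > 0\<close> by (simp add: algebra_simps)
  show "1 < middle_term k p x"
    by (rule middle_term_gt_one[OF k p x])
qed

lemma parameters_of_log_chain:
  assumes k: "k \<ge> 1" and chain: "\<forall>x>0. p * log_xcoth x < k * p * log_sinhc x \<and> 1 < middle_term k p x"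
  shows "k \<ge> 2 \<and> p \<ge> 12 / (5 * (k + 2))"
proof -
  have "p > 0"
  proof (rule ccontr)
    assume "\<not> p > 0"
    obtain x where x: "x > 0" "log_xcoth x \<le> log_sinhc x"
      using exists_log_xcoth_le_log_sinhc by blast
    then have "log_xcoth x \<le> k * log_sinhc x"
      using mult_right_mono[OF k less_imp_le[OF log_sinhc_pos[OF x(1)]]] by linarith
    then have "p * (k * log_sinhc x) \<le> p * log_xcoth x"
      using \<open>\<not> p > 0\<close> by (simp add: mult_left_mono_neg)
    with chain x(1) show False
      by (auto simp: algebra_simps)
  qed
  moreover have "k \<ge> 2"
  proof (rule ccontr)
    assume "\<not> k \<ge> 2"
    then obtain x where x: "x > 0" "k * log_sinhc x < log_xcoth x"
      using exists_mult_log_sinhc_less_log_xcoth by force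
    then have "p * (k * log_sinhc x) < p * log_xcoth x"
      using \<open>p > 0\<close> by simp
    with chain x(1) show False
      by (auto simp: algebra_simps)
  qed
  moreover have "p \<ge> 12 / (5 * (k + 2))"
    using exists_middle_term_less_one[of k p] k \<open>p > 0\<close> chain by force
  ultimately show ?thesis by simp
qed

theorem proposition4p9:
  fixes k p :: real
  assumes "k \<ge> 1"
  shows "(\<forall>x::real. x > 0 \<longrightarrow>
            k / (k + 2) * (sinh x / x) powr (k * p) + 2 / (k + 2) * (tanh x / x) powr p
              > 2 / (k + 2) * (x / sinh x) powr (k * p) + k / (k + 2) * (x / tanh x) powr p
          \<and> 2 / (k + 2) * (x / sinh x) powr (k * p) + k / (k + 2) * (x / tanh x) powr p > 1)
         \<longleftrightarrow> (k \<ge> 2 \<and> p \<ge> 12 / (5 * (k + 2)))"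
proof -
  have "k > 0"
    using assms by simp
  have "(\<forall>x>0. p * log_xcoth x < k * p * log_sinhc x \<and> 1 < middle_term k p x)
      \<longleftrightarrow> k \<ge> 2 \<and> p \<ge> 12 / (5 * (k + 2))"
    using parameters_of_log_chain[OF assms] log_chain_of_parameters by blast
  then show ?thesis
    using hyperbolic_chain_iff[OF \<open>k > 0\<close>] by simp
qed

end
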